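(* For every Epstein model $\mathfrak{M}$, with $\Theta=\mathsf{Th}(\mathfrak{M})$, we have $\mathsf{S}^{\Theta}=\{\mathfrak{N}\in\mathsf{M}:\mathsf{Th}(\mathfrak{N})=\Theta\}$, where $\mathsf{S}^{\Theta}=\{\langle v',\mathfrak{R}'\rangle: v'=v^{\Theta}\text{ and }\mathfrak{R}^{\Theta}_{\min}\subseteq\mathfrak{R}'\subseteq\mathfrak{R}^{\Theta}_{\max}\}$, $\mathfrak{R}^{\Theta}_{\min}=\{\langle\varphi,\psi\rangle:\varphi\looparrowright\psi\in\Theta\}$, $\mathfrak{R}^{\Theta}_{\max}=\{\langle\varphi,\psi\rangle:\varphi\looparrowright\psi\in\Theta\text{ or }\varphi\to\psi\notin\Theta\}$, and $v^{\Theta}:\Phi\to\{0,1\}$ is given by $v^{\Theta}(p)=1$ iff $p\in\Theta$.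
   Context: Language: propositional letters $\Phi=\{p_0,p_1,\dots\}$; connectives $\neg$, $\lor,\wedge,\to,\leftrightarrow,\vartriangle,\looparrowright$; $\mathsf{FOR}$ the set of all formulas. An Epstein model is $\langle v,\mathfrak{R}\rangle$ with $v:\Phi\to\{0,1\}$ and $\mathfrak{R}\subseteq\mathsf{FOR}^2$; $\mathsf{M}$ is the set of all Epstein models. Truth: letters via $v$, boolean connectives classical, $\langle v,\mathfrak{R}\rangle\vDash\varphi\vartriangle\psi$ iff both true and $\langle\varphi,\psi\rangle\in\mathfrak{R}$; $\langle v,\mathfrak{R}\rangle\vDash\varphi\looparrowright\psi$ iff $\varphi\to\psi$ true and $\langle\varphi,\psi\rangle\in\mathfrak{R}$. $\mathsf{Th}(\mathfrak{M})=\{\varphi\in\mathsf{FOR}:\mathfrak{M}\vDash\varphi\}$. *)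

theory Defs
  imports Main
begin

datatype form =
    Var nat
  | Neg form
  | Disj form form
  | Conj form form
  | Imp form form
  | Iff form form
  | RelConj form form
  | RelImp form form    (* looparrowright *)

type_synonym emodel = "(nat \<Rightarrow> bool) \<times> (form \<times> form) set"

fun sat :: "emodel \<Rightarrow> form \<Rightarrow> bool" where
  "sat M (Var p) = fst M p"
| "sat M (Neg a) = (\<not> sat M a)"
| "sat M (Disj a b) = (sat M a \<or> sat M b)"
| "sat M (Conj a b) = (sat M a \<and> sat M b)"
| "sat M (Imp a b) = (sat M a \<longrightarrow> sat M b)"
| "sat M (Iff a b) = (sat M a \<longleftrightarrow> sat M b)"
| "sat M (RelConj a b) = (sat M a \<and> sat M b \<and> (a, b) \<in> snd M)"
| "sat M (RelImp a b) = ((sat M a \<longrightarrow> sat M b) \<and> (a, b) \<in> snd M)"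

definition Th :: "emodel \<Rightarrow> form set" where
  "Th M = {\<phi>. sat M \<phi>}"

definition Rmin :: "form set \<Rightarrow> (form \<times> form) set" where
  "Rmin \<Theta> = {(\<phi>, \<psi>). RelImp \<phi> \<psi> \<in> \<Theta>}"

definition Rmax :: "form set \<Rightarrow> (form \<times> form) set" where
  "Rmax \<Theta> = {(\<phi>, \<psi>). RelImp \<phi> \<psi> \<in> \<Theta> \<or> Imp \<phi> \<psi> \<notin> \<Theta>}"

definition vTheta :: "form set \<Rightarrow> nat \<Rightarrow> bool" where
  "vTheta \<Theta> p = (Var p \<in> \<Theta>)"

definition STheta :: "form set \<Rightarrow> emodel set" where
  "STheta \<Theta> = {(v', R'). v' = vTheta \<Theta> \<and> Rmin \<Theta> \<subseteq> R' \<and> R' \<subseteq> Rmax \<Theta>}"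

end

theory Submission
  imports Defs
begin

text \<open>Membership in \<open>STheta \<Theta>\<close> fixes the truth of letters, \<open>Rmin\<close> supplies every
  pair a true \<open>RelImp\<close> needs, and \<open>Rmax\<close> excludes every pair that would make a false
  \<open>RelImp\<close> true (a false \<open>RelConj\<close> already has a false conjunct), so induction on
  formulas shows such a model has theory \<open>\<Theta>\<close>. Conversely, a model with theory \<open>\<Theta>\<close>
  satisfies these three constraints by evaluating \<open>Var\<close>, \<open>RelImp\<close> and \<open>Imp\<close> formulas.\<close>

lemma Th_eq_iff: "Th N = Th M \<longleftrightarrow> (\<forall>\<phi>. sat N \<phi> = sat M \<phi>)"
  by (auto simp: Th_def)

lemma sat_eq_if_in_STheta:
  assumes "N \<in> STheta (Th M)"
  shows "sat N \<phi> = sat M \<phi>"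
proof -
  obtain v R where N: "N = (v, R)" by (cases N)
  with assms have v: "v = vTheta (Th M)" and R: "Rmin (Th M) \<subseteq> R" "R \<subseteq> Rmax (Th M)"
    by (auto simp: STheta_def)
  show ?thesis
  proof (induction \<phi>)
    case (RelConj a b)
    then show ?case using R by (auto simp: N Rmin_def Rmax_def Th_def)
  next
    case (RelImp a b)
    then show ?case using R by (auto simp: N Rmin_def Rmax_def Th_def)
  qed (auto simp: N v vTheta_def Th_def)
qed

lemma in_STheta_if_sat_eq:
  assumes sat_eq: "\<And>\<phi>. sat N \<phi> = sat M \<phi>"
  shows "N \<in> STheta (Th M)"
proof -
  obtain v R where N: "N = (v, R)" by (cases N)
  have "v = vTheta (Th M)"
  proof
    fix p show "v p = vTheta (Th M) p"
      using sat_eq[of "Var p"] by (simp add: N vTheta_def Th_def)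
  qed
  moreover have "Rmin (Th M) \<subseteq> R"
  proof (rule subsetI, clarify)
    fix a b assume "(a, b) \<in> Rmin (Th M)"
    then show "(a, b) \<in> R" using sat_eq[of "RelImp a b"] by (simp add: N Rmin_def Th_def)
  qed
  moreover have "R \<subseteq> Rmax (Th M)"
  proof (rule subsetI, clarify)
    fix a b assume "(a, b) \<in> R"
    then show "(a, b) \<in> Rmax (Th M)"
      using sat_eq[of "RelImp a b"] sat_eq[of "Imp a b"] by (simp add: N Rmax_def Th_def)
  qed
  ultimately show ?thesis by (simp add: N STheta_def)
qed

theorem mainTheorem14:
  fixes M :: emodel
  shows "STheta (Th M) = {N. Th N = Th M}"
proof (intro set_eqI iffI)
  fix N assume "N \<in> STheta (Th M)"
  then show "N \<in> {N. Th N = Th M}" by (simp add: Th_eq_iff sat_eq_if_in_STheta)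
next
  fix N assume "N \<in> {N. Th N = Th M}"
  then show "N \<in> STheta (Th M)" by (simp add: Th_eq_iff in_STheta_if_sat_eq)
qed

end
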